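(* Let $p,q$ be primes with $p>2$, $q>p$, $q\ge 5$, $p\mid q-1$, $p\nmid q+1$, $p^2\nmid q-1$. Let $\lambda$ be a fixed generator of the unique subgroup of order $p$ of $(\mathbf Z/(q))^*$. Then a system of representatives of the conjugacy classes of subgroups of order $p$ of $\mathrm{GL}(2,q)$ is $$\left\langle \begin{pmatrix}1&0\\0&\lambda\end{pmatrix}\right\rangle,\ \left\langle \begin{pmatrix}\lambda&0\\0&\lambda\end{pmatrix}\right\rangle,\ \left\langle \begin{pmatrix}\lambda&0\\0&\lambda^{-1}\end{pmatrix}\right\rangle,\ \left\langle \begin{pmatrix}\lambda&0\\0&\lambda^{k}\end{pmatrix}\right\rangle,$$ where $k$ runs over a system of representatives of the elements of $(\mathbf Z/(p))^*\setminus\{1,-1\}$ under the equivalence relation $k\sim l$ if and only if $kl\equiv 1\pmod p$. In particular, the number of conjugacy classes of subgroups of order $p$ of $\mathrm{GL}(2,q)$ is $(p+3)/2$. *)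

theory Defs
  imports "HOL-Algebra.Algebra" "HOL-Number_Theory.Number_Theory"
begin

text \<open>2x2 matrices over Z/(q), entries represented by integers in {0..<q};
  a quadruple (a,b,c,d) stands for the matrix [[a,b],[c,d]].\<close>
type_synonym mat2 = "int \<times> int \<times> int \<times> int"

definition mat2_mult :: "int \<Rightarrow> mat2 \<Rightarrow> mat2 \<Rightarrow> mat2" where
  "mat2_mult q A B = (case A of (a,b,c,d) \<Rightarrow> case B of (e,f,g,h) \<Rightarrow>
     ((a*e + b*g) mod q, (a*f + b*h) mod q, (c*e + d*g) mod q, (c*f + d*h) mod q))"

definition mat2_det :: "mat2 \<Rightarrow> int" where
  "mat2_det A = (case A of (a,b,c,d) \<Rightarrow> a * d - b * c)"

definition mat2_entries_in :: "int \<Rightarrow> mat2 \<Rightarrow> bool" where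
  "mat2_entries_in q A = (case A of (a,b,c,d) \<Rightarrow>
     0 \<le> a \<and> a < q \<and> 0 \<le> b \<and> b < q \<and> 0 \<le> c \<and> c < q \<and> 0 \<le> d \<and> d < q)"

definition GL2 :: "int \<Rightarrow> mat2 monoid" where
  "GL2 q = \<lparr> carrier = {A. mat2_entries_in q A \<and> mat2_det A mod q \<noteq> 0},
             monoid.mult = mat2_mult q,
             one = (1,0,0,1) \<rparr>"

definition conj_subgroups :: "('a, 'b) monoid_scheme \<Rightarrow> 'a set \<Rightarrow> 'a set \<Rightarrow> bool" where
  "conj_subgroups G H K \<longleftrightarrow>
     (\<exists>g\<in>carrier G. K = (\<lambda>h. g \<otimes>\<^bsub>G\<^esub> h \<otimes>\<^bsub>G\<^esub> inv\<^bsub>G\<^esub> g) ` H)"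

definition conj_class_reps :: "('a, 'b) monoid_scheme \<Rightarrow> nat \<Rightarrow> 'a set set \<Rightarrow> bool" where
  "conj_class_reps G n R \<longleftrightarrow>
     (\<forall>H\<in>R. subgroup H G \<and> card H = n) \<and>
     (\<forall>H. subgroup H G \<and> card H = n \<longrightarrow> (\<exists>K\<in>R. conj_subgroups G H K)) \<and>
     (\<forall>H\<in>R. \<forall>K\<in>R. conj_subgroups G H K \<longrightarrow> H = K)"

definition subgroup_conj_classes :: "('a, 'b) monoid_scheme \<Rightarrow> nat \<Rightarrow> 'a set set set" where
  "subgroup_conj_classes G n =
     {{K. subgroup K G \<and> conj_subgroups G H K} | H. subgroup H G \<and> card H = n}"

text \<open>S is a system of representatives of (Z/(p))^* minus {1,-1} (residues 2..p-2)
  under the equivalence k ~ l iff k = l or k*l = 1 mod p.\<close>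
definition inv_pair_reps :: "nat \<Rightarrow> nat set \<Rightarrow> bool" where
  "inv_pair_reps p S \<longleftrightarrow> S \<subseteq> {2..p-2} \<and>
     (\<forall>k\<in>{2..p-2}. \<exists>!l. l \<in> S \<and> (k = l \<or> [k * l = 1] (mod p)))"

end

theory Submission
  imports Defs
begin

text \<open>An element of order \<open>p\<close> in \<open>GL(2, q)\<close> permutes the \<open>q + 1\<close> points of the
  projective line over \<open>Z/(q)\<close> in orbits of size \<open>1\<close> or \<open>p\<close>. Since \<open>q + 1 \<equiv> 2 (mod p)\<close>
  it has two fixed points, i.e. two independent eigenvectors, so it is conjugate to a diagonal
  matrix whose entries are \<open>p\<close>-th roots of unity \<open>\<lambda>\<^sup>a\<close>, \<open>\<lambda>\<^sup>b\<close>. Conjugating by the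
  swap matrix and passing to another generator brings \<open>(a, b)\<close> to \<open>(0, 1)\<close> or \<open>(1, k)\<close>, and
  \<open>(1, k)\<close> to \<open>(1, k\<^sup>-\<^sup>1)\<close>. Conversely, trace and determinant are conjugation invariants,
  so conjugate subgroups have the same exponent pair \<open>{a, b}\<close> up to a common factor; this
  separates the listed subgroups. Their number is \<open>3 + (p - 3) / 2\<close>, because \<open>k \<mapsto> k\<^sup>-\<^sup>1\<close>
  is a fixed point free involution of \<open>{2, ..., p - 2}\<close>.\<close>

section \<open>Maps of prime period\<close>

lemma funpow_mult_fixed:
  assumes "(f ^^ n) x = x"
  shows "(f ^^ (n * k)) x = x"
  using assms by (induction k) (simp_all add: funpow_add)

lemma funpow_mod_fixed:
  assumes "(f ^^ n) x = x"
  shows "(f ^^ m) x = (f ^^ (m mod n)) x"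
proof -
  have "(f ^^ m) x = (f ^^ (m mod n)) ((f ^^ (n * (m div n))) x)"
    by (metis funpow_add o_apply mod_div_mult_eq mult.commute)
  with funpow_mult_fixed[OF assms] show ?thesis by simp
qed

lemma funpow_prime_period_fixed:
  fixes p :: nat
  assumes "Factorial_Ring.prime p" and "(f ^^ p) x = x" and "(f ^^ d) x = x" and "\<not> p dvd d"
  shows "f x = x"
proof -
  have "coprime d p"
    using assms(1,4) prime_imp_coprime[of p d] by (simp add: coprime_commute)
  then obtain k where "[d * k = 1] (mod p)"
    using cong_solve_coprime_nat by fastforce
  then have "d * k mod p = 1"
    using prime_gt_1_nat[OF assms(1)] by (simp add: cong_def)
  have "x = (f ^^ (d * k)) x"
    using funpow_mult_fixed[OF assms(3)] by simp
  also have "\<dots> = (f ^^ (d * k mod p)) x"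
    using funpow_mod_fixed[OF assms(2)] .
  finally show ?thesis
    using \<open>d * k mod p = 1\<close> by simp
qed

lemma funpow_prime_period_inj_on:
  fixes p :: nat
  assumes "Factorial_Ring.prime p" and "(f ^^ p) x = x" and "f x \<noteq> x"
  shows "inj_on (\<lambda>i. (f ^^ i) x) {..<p}"
proof (rule linorder_inj_onI')
  fix i j assume "i \<in> {..<p}" "j \<in> {..<p}" "i < j"
  show "(f ^^ i) x \<noteq> (f ^^ j) x"
  proof
    assume "(f ^^ i) x = (f ^^ j) x"
    then have "(f ^^ (p - j + i)) x = (f ^^ (p - j + j)) x"
      by (simp add: funpow_add)
    also have "\<dots> = x"
      using \<open>j \<in> {..<p}\<close> assms(2) by simp
    finally have "(f ^^ (p - j + i)) x = x" .
    moreover have "\<not> p dvd p - j + i"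
      using \<open>i < j\<close> \<open>j \<in> {..<p}\<close> by (intro nat_dvd_not_less) auto
    ultimately show False
      using funpow_prime_period_fixed[OF assms(1,2)] assms(3) by blast
  qed
qed

lemma funpow_in_invariant: "f ` Y \<subseteq> Y \<Longrightarrow> x \<in> Y \<Longrightarrow> (f ^^ n) x \<in> Y"
  by (induction n) auto

lemma equiv_funpow_periodic:
  assumes "f ` Y \<subseteq> Y" and "0 < n" and "\<And>x. x \<in> Y \<Longrightarrow> (f ^^ n) x = x"
  shows "equiv Y {(x, (f ^^ i) x) | x i. x \<in> Y}"
proof (rule equivI)
  show "{(x, (f ^^ i) x) | x i. x \<in> Y} \<subseteq> Y \<times> Y" "refl_on Y {(x, (f ^^ i) x) | x i. x \<in> Y}"
    using funpow_in_invariant[OF assms(1)] by (auto simp: refl_on_def intro: exI[of _ 0])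
  show "sym {(x, (f ^^ i) x) | x i. x \<in> Y}"
  proof (rule symI, clarify)
    fix x i assume "x \<in> Y"
    have "(n - 1) * i + i = n * i"
      using assms(2) by (cases n) auto
    then have "(f ^^ ((n - 1) * i)) ((f ^^ i) x) = x"
      using funpow_mult_fixed[OF assms(3)[OF \<open>x \<in> Y\<close>]] by (metis funpow_add o_apply)
    then show "\<exists>y j. ((f ^^ i) x, x) = (y, (f ^^ j) y) \<and> y \<in> Y"
      using funpow_in_invariant[OF assms(1) \<open>x \<in> Y\<close>]
      by (intro exI[of _ "(f ^^ i) x"] exI[of _ "(n - 1) * i"]) simp
  qed
  show "trans {(x, (f ^^ i) x) | x i. x \<in> Y}"
  proof (rule transI, clarify)
    fix x i j assume "x \<in> Y"
    then show "\<exists>y k. (x, (f ^^ j) ((f ^^ i) x)) = (y, (f ^^ k) y) \<and> y \<in> Y"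
      by (intro exI[of _ x] exI[of _ "j + i"]) (simp add: funpow_add)
  qed
qed

lemma funpow_periodic_class:
  assumes "x \<in> Y" and "0 < n" and "(f ^^ n) x = x"
  shows "{(x, (f ^^ i) x) | x i. x \<in> Y} `` {x} = (\<lambda>i. (f ^^ i) x) ` {..<n}"
proof -
  have "(f ^^ i) x \<in> (\<lambda>i. (f ^^ i) x) ` {..<n}" for i
    using funpow_mod_fixed[OF assms(3), of i] assms(2) by auto
  then show ?thesis
    using assms(1) by auto
qed

lemma prime_period_dvd_card:
  fixes p :: nat
  assumes "Factorial_Ring.prime p" and "finite Y" and "f ` Y \<subseteq> Y"
    and "\<And>x. x \<in> Y \<Longrightarrow> (f ^^ p) x = x" and "\<And>x. x \<in> Y \<Longrightarrow> f x \<noteq> x"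
  shows "p dvd card Y"
proof (rule equiv_imp_dvd_card[OF assms(2)])
  have "0 < p"
    using assms(1) prime_gt_0_nat by blast
  then show "equiv Y {(x, (f ^^ i) x) | x i. x \<in> Y}"
    by (rule equiv_funpow_periodic[OF assms(3) _ assms(4)])
  fix C assume "C \<in> Y // {(x, (f ^^ i) x) | x i. x \<in> Y}"
  then obtain x where "x \<in> Y" and "C = {(x, (f ^^ i) x) | x i. x \<in> Y} `` {x}"
    by (rule quotientE)
  then have "C = (\<lambda>i. (f ^^ i) x) ` {..<p}"
    using funpow_periodic_class[OF _ \<open>0 < p\<close> assms(4)] by simp
  then show "p dvd card C"
    using \<open>x \<in> Y\<close> funpow_prime_period_inj_on[OF assms(1) assms(4,5)] by (simp add: card_image)
qed

lemma prime_period_dvd_card_diff_fixed: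
  fixes p :: nat
  assumes "Factorial_Ring.prime p" and "finite Z" and "f ` Z \<subseteq> Z" and "\<And>x. x \<in> Z \<Longrightarrow> (f ^^ p) x = x"
  shows "p dvd card Z - card {x \<in> Z. f x = x}"
proof -
  let ?Y = "Z - {x \<in> Z. f x = x}"
  have "f x \<in> ?Y" if "x \<in> ?Y" for x
  proof
    show "f x \<in> Z" using that assms(3) by auto
    show "f x \<notin> {x \<in> Z. f x = x}"
    proof
      assume "f x \<in> {x \<in> Z. f x = x}"
      then have "(f ^^ n) (f x) = f x" for n
        by (induction n) auto
      then have "(f ^^ p) x = f x"
        using assms(1) prime_gt_0_nat by (metis Suc_pred funpow_Suc_right o_apply)
      then show False using that assms(4) by auto
    qed
  qed
  then have "p dvd card ?Y"
    using assms by (intro prime_period_dvd_card[of p ?Y f]) auto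
  then show ?thesis
    using assms(2) by (simp add: card_Diff_subset)
qed

section \<open>Inverse pairs modulo a prime\<close>

lemma cong_mult_eq_one_unique_nat:
  fixes p :: nat
  assumes "[x * k = 1] (mod p)" and "[k * y = 1] (mod p)"
  shows "[x = y] (mod p)"
proof -
  have "[x * (k * y) = x * 1] (mod p)"
    using assms(2) by (rule cong_scalar_left)
  moreover have "[(x * k) * y = 1 * y] (mod p)"
    using assms(1) by (rule cong_scalar_right)
  ultimately show ?thesis
    by (simp add: mult.assoc cong_sym_eq) (metis cong_sym cong_trans)
qed

lemma cong_mult_right_subst:
  fixes p :: nat
  shows "[x = y * k] (mod p) \<Longrightarrow> [k = c] (mod p) \<Longrightarrow> [x = y * c] (mod p)"
  using cong_trans cong_scalar_left by blast

lemma cong_pred_square_nat: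
  fixes p :: nat
  assumes "2 \<le> p"
  shows "[(p - 1) * (p - 1) = 1] (mod p)"
proof -
  define n where "n = p - 2"
  have "p = n + 2"
    using assms by (simp add: n_def)
  then have "(p - 1) * (p - 1) = p * n + 1"
    by (simp add: algebra_simps)
  moreover have "[p * n + 1 = 0 + 1] (mod p)"
    by (intro cong_add cong_mult_self_left cong_refl)
  ultimately show ?thesis
    by simp
qed

lemma cong_mult_eq_one_not_self:
  fixes p k :: nat
  assumes "Factorial_Ring.prime p" and "k \<in> {2..p-2}"
  shows "\<not> [k * k = 1] (mod p)"
proof
  assume "[k * k = 1] (mod p)"
  then have "p dvd k * k - 1"
    using assms(2) cong_altdef_nat[of 1 "k * k" p] by (simp add: Suc_le_eq)
  also have "k * k - 1 = (k - 1) * (k + 1)"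
    using assms(2) by (cases k) (auto simp: algebra_simps)
  finally have "p dvd k - 1 \<or> p dvd k + 1"
    using assms(1) prime_dvd_mult_iff by blast
  moreover have "\<not> p dvd k - 1" "\<not> p dvd k + 1"
    using assms(2) by (intro nat_dvd_not_less; auto)+
  ultimately show False by blast
qed

context
  fixes p :: nat
  assumes p_prime: "Factorial_Ring.prime p"
begin

private definition inv_mod :: "nat \<Rightarrow> nat" where
  "inv_mod k = k ^ (p - 2) mod p"

private lemma cong_inv_mod:
  assumes "k \<in> {2..p-2}"
  shows "[k * inv_mod k = 1] (mod p)"
proof -
  have "\<not> p dvd k"
    using assms by (intro nat_dvd_not_less) auto
  then have "[k ^ (p - 1) = 1] (mod p)"
    using p_prime fermat_theorem by blast
  moreover have "p - 1 = Suc (p - 2)"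
    using assms by auto
  then have "k * k ^ (p - 2) = k ^ (p - 1)"
    by simp
  ultimately show ?thesis
    unfolding inv_mod_def by (metis cong_def mod_mult_right_eq)
qed

private lemma inv_mod_mem:
  assumes "k \<in> {2..p-2}"
  shows "inv_mod k \<in> {2..p-2}"
proof -
  have inv: "[k * inv_mod k = 1] (mod p)"
    using cong_inv_mod[OF assms] .
  have "k < p" "3 < p"
    using assms by auto
  have "inv_mod k \<noteq> 0"
  proof
    assume "inv_mod k = 0"
    then show False
      using inv \<open>3 < p\<close> by (simp add: cong_def)
  qed
  moreover have "inv_mod k \<noteq> 1"
  proof
    assume "inv_mod k = 1"
    then have "[k = 1] (mod p)"
      using inv by simp
    then show False
      using cong_less_modulus_unique_nat[of k 1 p] assms \<open>k < p\<close> \<open>3 < p\<close> by auto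
  qed
  moreover have "inv_mod k \<noteq> p - 1"
  proof
    assume "inv_mod k = p - 1"
    then have "[k = p - 1] (mod p)"
      using cong_mult_eq_one_unique_nat[of k "p - 1" p "p - 1"] inv cong_pred_square_nat[of p] \<open>3 < p\<close>
      by simp
    then show False
      using cong_less_modulus_unique_nat[of k "p - 1" p] assms \<open>k < p\<close> by auto
  qed
  moreover have "inv_mod k < p"
    using \<open>3 < p\<close> by (simp add: inv_mod_def)
  ultimately show ?thesis
    by auto
qed

private lemma inv_mod_eq_iff:
  assumes "k \<in> {2..p-2}" and "l \<in> {2..p-2}"
  shows "[k * l = 1] (mod p) \<longleftrightarrow> l = inv_mod k"
proof
  assume "[k * l = 1] (mod p)"
  then have "[inv_mod k = l] (mod p)"
    using cong_mult_eq_one_unique_nat[of "inv_mod k" k p l] cong_inv_mod[OF assms(1)]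
    by (simp add: mult.commute)
  moreover have "inv_mod k < p" "l < p"
    using inv_mod_mem[OF assms(1)] assms(2) by auto
  ultimately show "l = inv_mod k"
    using cong_less_modulus_unique_nat by blast
qed (use cong_inv_mod[OF assms(1)] in simp)

private lemma inv_mod_inv_mod: "k \<in> {2..p-2} \<Longrightarrow> inv_mod (inv_mod k) = k"
  using inv_mod_eq_iff[of "inv_mod k" k] inv_mod_mem cong_inv_mod by (simp add: mult.commute)

private lemma inv_pair_reps_unique:
  assumes "inv_pair_reps p S" and "k \<in> {2..p-2}"
  shows "\<exists>!l. l \<in> S \<and> (k = l \<or> l = inv_mod k)"
proof -
  have "S \<subseteq> {2..p-2}"
    using assms(1) by (simp add: inv_pair_reps_def)
  then have "l \<in> S \<and> (k = l \<or> [k * l = 1] (mod p)) \<longleftrightarrow> l \<in> S \<and> (k = l \<or> l = inv_mod k)" for l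
    using inv_mod_eq_iff[OF assms(2)] by blast
  moreover have "\<exists>!l. l \<in> S \<and> (k = l \<or> [k * l = 1] (mod p))"
    using assms unfolding inv_pair_reps_def by blast
  ultimately show ?thesis
    by simp
qed

private lemma inv_pair_reps_cover:
  assumes "inv_pair_reps p S"
  shows "{2..p-2} = S \<union> inv_mod ` S"
proof
  show "{2..p-2} \<subseteq> S \<union> inv_mod ` S"
  proof
    fix k assume k: "k \<in> {2..p-2}"
    then obtain l where "l \<in> S" and "k = l \<or> l = inv_mod k"
      using inv_pair_reps_unique[OF assms] by blast
    then have "k = l \<or> k = inv_mod l"
      using inv_mod_inv_mod[OF k] by (elim disjE) simp_all
    then show "k \<in> S \<union> inv_mod ` S"
      using \<open>l \<in> S\<close> by blast
  qed
  show "S \<union> inv_mod ` S \<subseteq> {2..p-2}"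
    using assms inv_mod_mem by (auto simp: inv_pair_reps_def)
qed

private lemma inv_pair_reps_disjoint:
  assumes "inv_pair_reps p S"
  shows "S \<inter> inv_mod ` S = {}"
proof (rule equals0I)
  have S: "S \<subseteq> {2..p-2}"
    using assms by (simp add: inv_pair_reps_def)
  fix l assume "l \<in> S \<inter> inv_mod ` S"
  then have "l \<in> S" and "inv_mod l \<in> S"
    using inv_mod_inv_mod S by auto
  then have "inv_mod l = l"
    using inv_pair_reps_unique[OF assms, of l] S by blast
  then have "[l * l = 1] (mod p)"
    using cong_inv_mod[of l] \<open>l \<in> S\<close> S by auto
  then show False
    using cong_mult_eq_one_not_self[OF p_prime, of l] \<open>l \<in> S\<close> S by auto
qed

lemma card_inv_pair_reps:
  assumes "inv_pair_reps p S"
  shows "2 * card S = p - 3"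
proof -
  have S: "S \<subseteq> {2..p-2}"
    using assms by (simp add: inv_pair_reps_def)
  then have "finite S"
    using finite_subset by blast
  have "inj_on inv_mod S"
    by (rule inj_on_inverseI[where g = inv_mod]) (use inv_mod_inv_mod S in blast)
  have "p - 3 = card {2..p-2}"
    by simp
  also have "\<dots> = card (S \<union> inv_mod ` S)"
    using inv_pair_reps_cover[OF assms] by simp
  also have "\<dots> = card S + card (inv_mod ` S)"
    using inv_pair_reps_disjoint[OF assms] \<open>finite S\<close> by (simp add: card_Un_disjoint)
  also have "\<dots> = 2 * card S"
    using \<open>inj_on inv_mod S\<close> by (simp add: card_image)
  finally show ?thesis
    by simp
qed

end

text \<open>The pair \<open>(a, b)\<close> stands for the subgroup generated by \<open>diag(\<lambda>\<^sup>a, \<lambda>\<^sup>b)\<close>.\<close>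

definition rep_exponents :: "nat \<Rightarrow> nat set \<Rightarrow> (nat \<times> nat) set" where
  "rep_exponents p S = {(0, 1), (1, 1), (1, p - 1)} \<union> Pair 1 ` S"

lemma rep_exponents_eq:
  "rep_exponents p S = insert (0, 1) (Pair 1 ` ({1, p - 1} \<union> S))"
  by (auto simp: rep_exponents_def)

context
  fixes p :: nat and S :: "nat set"
  assumes p_prime: "Factorial_Ring.prime p" and p_gt_2: "2 < p" and S_reps: "inv_pair_reps p S"
begin

lemma rep_exponent_bounds:
  assumes "\<beta> \<in> {1, p - 1} \<union> S"
  shows "0 < \<beta>" and "\<beta> < p"
proof -
  have "S \<subseteq> {2..p-2}"
    using S_reps by (simp add: inv_pair_reps_def)
  then have "\<beta> = 1 \<or> \<beta> = p - 1 \<or> 2 \<le> \<beta> \<and> \<beta> \<le> p - 2"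
    using assms by auto
  then show "0 < \<beta>" "\<beta> < p"
    using p_gt_2 by auto
qed

lemma rep_exponent_inverse_eq:
  assumes "\<beta> \<in> {1, p - 1} \<union> S" and "\<beta>' \<in> {1, p - 1} \<union> S" and "[\<beta> * \<beta>' = 1] (mod p)"
  shows "\<beta> = \<beta>'"
proof -
  have self_inverse: "[\<gamma> * \<gamma> = 1] (mod p)" if "\<gamma> \<in> {1, p - 1}" for \<gamma>
    using that cong_pred_square_nat[of p] p_gt_2 by auto
  consider "\<beta> \<in> {1, p - 1}" | "\<beta>' \<in> {1, p - 1}" | "\<beta> \<in> S" "\<beta>' \<in> S"
    using assms(1,2) by blast
  then have "[\<beta> = \<beta>'] (mod p)"
  proof cases
    case 1
    have "[\<beta>' * \<beta> = 1] (mod p)"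
      using assms(3) by (simp add: mult.commute)
    from cong_mult_eq_one_unique_nat[OF this self_inverse[OF 1]] show ?thesis
      by (rule cong_sym)
  next
    case 2
    show ?thesis
      using cong_mult_eq_one_unique_nat[OF assms(3) self_inverse[OF 2]] .
  next
    case 3
    let ?P = "\<lambda>l. l \<in> S \<and> (\<beta> = l \<or> [\<beta> * l = 1] (mod p))"
    have "\<beta> \<in> {2..p-2}"
      using 3 S_reps by (auto simp: inv_pair_reps_def)
    then have "\<exists>!l. ?P l"
      using S_reps unfolding inv_pair_reps_def by blast
    then have "(THE l. ?P l) = \<beta>" "(THE l. ?P l) = \<beta>'"
      using 3 assms(3) by (auto intro: the1_equality)
    then show ?thesis
      by simp
  qed
  then show ?thesis
    using rep_exponent_bounds(2)[OF assms(1)] rep_exponent_bounds(2)[OF assms(2)]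
    by (rule cong_less_modulus_unique_nat)
qed

lemma rep_exponent_nonzero: "\<beta> \<in> {1, p - 1} \<union> S \<Longrightarrow> \<not> [\<beta> = 0] (mod p)"
  using rep_exponent_bounds by (simp add: cong_0_iff nat_dvd_not_less)

lemma rep_exponent_scaled_eq:
  assumes "\<beta> \<in> {1, p - 1} \<union> S" and "\<beta>' \<in> {1, p - 1} \<union> S"
    and "[1 = k] (mod p) \<and> [\<beta> = \<beta>' * k] (mod p) \<or> [1 = \<beta>' * k] (mod p) \<and> [\<beta> = k] (mod p)"
  shows "\<beta> = \<beta>'"
  using assms(3)
proof
  assume "[1 = k] (mod p) \<and> [\<beta> = \<beta>' * k] (mod p)"
  then have "[\<beta> = \<beta>'] (mod p)"
    using cong_mult_right_subst[of \<beta> \<beta>' k p 1] by (simp add: cong_sym_eq)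
  then show ?thesis
    using rep_exponent_bounds(2)[OF assms(1)] rep_exponent_bounds(2)[OF assms(2)]
    by (rule cong_less_modulus_unique_nat)
next
  assume "[1 = \<beta>' * k] (mod p) \<and> [\<beta> = k] (mod p)"
  then have "[\<beta> * \<beta>' = 1] (mod p)"
    using cong_mult_right_subst[of 1 \<beta>' k p \<beta>] by (simp add: cong_sym_eq mult.commute)
  then show ?thesis
    using rep_exponent_inverse_eq assms(1,2) by blast
qed

lemma rep_exponent_not_scaled_0_1:
  assumes "\<beta> \<in> {1, p - 1} \<union> S"
  shows "\<not> ([0 = k] (mod p) \<and> [1 = \<beta> * k] (mod p) \<or> [0 = \<beta> * k] (mod p) \<and> [1 = k] (mod p))"
proof
  assume "[0 = k] (mod p) \<and> [1 = \<beta> * k] (mod p) \<or> [0 = \<beta> * k] (mod p) \<and> [1 = k] (mod p)"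
  then have "[1 = \<beta> * 0] (mod p) \<or> [\<beta> * 1 = 0] (mod p)"
    using cong_mult_right_subst[of 1 \<beta> k p 0] cong_mult_right_subst[of 0 \<beta> k p 1]
    by (auto simp: cong_sym_eq)
  moreover have "\<not> [1 = 0] (mod p)"
    using p_gt_2 by (simp add: cong_def)
  ultimately show False
    using rep_exponent_nonzero[OF assms] by auto
qed

lemma rep_exponents_inequivalent:
  assumes "(a, b) \<in> rep_exponents p S" and "(a', b') \<in> rep_exponents p S"
    and "[a = a' * k] (mod p) \<and> [b = b' * k] (mod p) \<or> [a = b' * k] (mod p) \<and> [b = a' * k] (mod p)"
  shows "(a, b) = (a', b')"
proof -
  have shape: "x = 0 \<and> y = 1 \<or> x = 1 \<and> y \<in> {1, p - 1} \<union> S" if "(x, y) \<in> rep_exponents p S" for x y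
    using that by (auto simp: rep_exponents_eq)
  consider "a = 0" "b = 1" "a' = 0" "b' = 1"
    | "a = 0" "b = 1" "a' = 1" "b' \<in> {1, p - 1} \<union> S"
    | "a = 1" "b \<in> {1, p - 1} \<union> S" "a' = 0" "b' = 1"
    | "a = 1" "b \<in> {1, p - 1} \<union> S" "a' = 1" "b' \<in> {1, p - 1} \<union> S"
    using shape[OF assms(1)] shape[OF assms(2)] by blast
  then show ?thesis
  proof cases
    case 2
    then show ?thesis
      using assms(3) rep_exponent_not_scaled_0_1[of b' k] by simp
  next
    case 3
    moreover have "\<not> [1 = 0] (mod p)"
      using p_gt_2 by (simp add: cong_def)
    ultimately show ?thesis
      using assms(3) rep_exponent_nonzero[of b] by auto
  next
    case 4
    then show ?thesis
      using assms(3) rep_exponent_scaled_eq[of b b' k] by simp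
  qed simp
qed

end

lemma card_rep_exponents:
  assumes "2 < p" and "inv_pair_reps p S"
  shows "card (rep_exponents p S) = card S + 3"
proof -
  have S: "S \<subseteq> {2..p-2}"
    using assms(2) by (simp add: inv_pair_reps_def)
  then have "finite S"
    using finite_subset by blast
  have "2 \<le> x \<and> x \<le> p - 2" if "x \<in> S" for x
    using S that by auto
  then have "{(0::nat, 1::nat), (1, 1), (1, p - 1)} \<inter> Pair (1::nat) ` S = {}"
    using assms(1) by fastforce
  then have "card (rep_exponents p S) = card {(0::nat, 1::nat), (1, 1), (1, p - 1)} + card (Pair (1::nat) ` S)"
    unfolding rep_exponents_def using \<open>finite S\<close> by (intro card_Un_disjoint) auto
  moreover have "card {(0::nat, 1::nat), (1, 1), (1, p - 1)} = 3"
    using assms(1) by simp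
  moreover have "card (Pair (1::nat) ` S) = card S"
    by (rule card_image) (simp add: inj_on_def)
  ultimately show ?thesis
    by simp
qed

section \<open>Conjugate subgroups\<close>

definition conj_elem :: "('a, 'b) monoid_scheme \<Rightarrow> 'a \<Rightarrow> 'a \<Rightarrow> 'a" where
  "conj_elem G x h = x \<otimes>\<^bsub>G\<^esub> h \<otimes>\<^bsub>G\<^esub> inv\<^bsub>G\<^esub> x"

lemma conj_subgroups_iff_conj_elem:
  "conj_subgroups G H K \<longleftrightarrow> (\<exists>x\<in>carrier G. K = conj_elem G x ` H)"
  by (simp add: conj_subgroups_def conj_elem_def)

context group
begin

lemma conj_elem_closed [intro, simp]:
  "x \<in> carrier G \<Longrightarrow> h \<in> carrier G \<Longrightarrow> conj_elem G x h \<in> carrier G"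
  by (simp add: conj_elem_def)

lemma conj_elem_one [simp]: "h \<in> carrier G \<Longrightarrow> conj_elem G \<one> h = h"
  by (simp add: conj_elem_def)

lemma conj_elem_of_one [simp]: "x \<in> carrier G \<Longrightarrow> conj_elem G x \<one> = \<one>"
  by (simp add: conj_elem_def)

lemma conj_elem_conj_elem:
  "x \<in> carrier G \<Longrightarrow> y \<in> carrier G \<Longrightarrow> h \<in> carrier G \<Longrightarrow>
    conj_elem G x (conj_elem G y h) = conj_elem G (x \<otimes> y) h"
  by (simp add: conj_elem_def inv_mult_group m_assoc)

lemma conj_elem_inv_cancel [simp]:
  "x \<in> carrier G \<Longrightarrow> h \<in> carrier G \<Longrightarrow> conj_elem G (inv x) (conj_elem G x h) = h"
  by (simp add: conj_elem_conj_elem)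

lemma conj_elem_mult:
  assumes "x \<in> carrier G" "a \<in> carrier G" "b \<in> carrier G"
  shows "conj_elem G x (a \<otimes> b) = conj_elem G x a \<otimes> conj_elem G x b"
proof -
  have "inv x \<otimes> (x \<otimes> z) = z" if "z \<in> carrier G" for z
    using assms(1) that by (simp add: m_assoc[symmetric])
  then show ?thesis
    using assms by (simp add: conj_elem_def m_assoc)
qed

lemma conj_elem_pow:
  "x \<in> carrier G \<Longrightarrow> g \<in> carrier G \<Longrightarrow> conj_elem G x (g [^] (n::nat)) = conj_elem G x g [^] n"
  by (induction n) (simp_all add: conj_elem_mult)

lemma conj_elem_image_generate:
  assumes "finite (carrier G)" and "x \<in> carrier G" and "g \<in> carrier G"
  shows "conj_elem G x ` generate G {g} = generate G {conj_elem G x g}"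
proof -
  have "generate G {h} = range (\<lambda>k::nat. h [^] k)" if "h \<in> carrier G" for h
    using generate_pow_on_finite_carrier[OF assms(1) that] by auto
  then show ?thesis
    using assms(2,3) by (simp add: image_image conj_elem_pow)
qed

lemma conj_subgroups_refl: "H \<subseteq> carrier G \<Longrightarrow> conj_subgroups G H H"
  unfolding conj_subgroups_iff_conj_elem
  by (rule bexI[of _ \<one>]) (auto simp: image_iff subset_iff)

lemma conj_subgroups_trans:
  assumes "H \<subseteq> carrier G" and "conj_subgroups G H K" and "conj_subgroups G K L"
  shows "conj_subgroups G H L"
proof -
  obtain x y where "x \<in> carrier G" "K = conj_elem G x ` H" "y \<in> carrier G" "L = conj_elem G y ` K"
    using assms(2,3) by (auto simp: conj_subgroups_iff_conj_elem)
  then have "L = conj_elem G (y \<otimes> x) ` H"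
    using assms(1) by (auto simp: image_image conj_elem_conj_elem subset_iff intro!: image_cong)
  then show ?thesis
    using \<open>x \<in> carrier G\<close> \<open>y \<in> carrier G\<close> by (auto simp: conj_subgroups_iff_conj_elem)
qed

lemma conj_subgroups_sym:
  assumes "H \<subseteq> carrier G" and "conj_subgroups G H K"
  shows "conj_subgroups G K H"
proof -
  obtain x where "x \<in> carrier G" "K = conj_elem G x ` H"
    using assms(2) by (auto simp: conj_subgroups_iff_conj_elem)
  then have "H = conj_elem G (inv x) ` K"
    using assms(1) by (auto simp: image_image subset_iff intro!: image_cong[OF refl, symmetric])
  then show ?thesis
    using \<open>x \<in> carrier G\<close> by (auto simp: conj_subgroups_iff_conj_elem)
qed

lemma card_subgroup_conj_classes:
  assumes "conj_class_reps G n R"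
  shows "card (subgroup_conj_classes G n) = card R"
proof -
  define cls where "cls H = {K. subgroup K G \<and> conj_subgroups G H K}" for H
  have R: "subgroup H G" "card H = n" if "H \<in> R" for H
    using assms that by (auto simp: conj_class_reps_def)
  have cls_eq: "cls H = cls K" if "subgroup H G" "conj_subgroups G H K" for H K
  proof -
    have "K \<subseteq> carrier G"
      using that subgroup.subset by (auto simp: conj_subgroups_iff_conj_elem)
    then show ?thesis
      using that subgroup.subset conj_subgroups_sym conj_subgroups_trans
      unfolding cls_def by metis
  qed
  have "subgroup_conj_classes G n = cls ` R"
  proof
    show "subgroup_conj_classes G n \<subseteq> cls ` R"
    proof
      fix C assume "C \<in> subgroup_conj_classes G n"
      then obtain H where H: "subgroup H G" "card H = n" "C = cls H"
        unfolding subgroup_conj_classes_def cls_def by blast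
      then obtain K where "K \<in> R" "conj_subgroups G H K"
        using assms by (auto simp: conj_class_reps_def)
      then show "C \<in> cls ` R"
        using H cls_eq by blast
    qed
    show "cls ` R \<subseteq> subgroup_conj_classes G n"
      unfolding subgroup_conj_classes_def cls_def using R by blast
  qed
  moreover have "inj_on cls R"
  proof (rule inj_onI)
    fix H K assume "H \<in> R" "K \<in> R" "cls H = cls K"
    have "K \<in> cls K"
      using R(1)[OF \<open>K \<in> R\<close>] conj_subgroups_refl subgroup.subset by (auto simp: cls_def)
    then have "K \<in> cls H"
      using \<open>cls H = cls K\<close> by simp
    then show "H = K"
      using assms \<open>H \<in> R\<close> \<open>K \<in> R\<close> by (auto simp: cls_def conj_class_reps_def)
  qed
  ultimately show ?thesis
    by (simp add: card_image)
qed

lemma subgroup_prime_card_generate: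
  assumes "subgroup H G" and "Factorial_Ring.prime (card H)" and "g \<in> H" and "g \<noteq> \<one>"
  shows "H = generate G {g}"
proof -
  let ?K = "generate G {g}"
  have "finite H"
    using assms(2) card_ge_0_finite prime_gt_0_nat by blast
  have "?K \<subseteq> H"
    using assms(1,3) by (intro generate_subgroup_incl) auto
  moreover have "subgroup ?K G"
    using assms(1,3) subgroup.mem_carrier by (intro generate_is_subgroup) auto
  ultimately have "subgroup ?K (G\<lparr>carrier := H\<rparr>)"
    using assms(1) subgroup_incl by blast
  then have "card ?K dvd order (G\<lparr>carrier := H\<rparr>)"
    using group.lagrange[OF subgroup_imp_group[OF assms(1)]] dvd_triv_right by metis
  then have "card ?K dvd card H"
    by (simp add: order_def)
  moreover have "card ?K \<noteq> 1"
  proof -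
    have "{\<one>, g} \<subseteq> ?K"
      by (auto intro: generate.one generate.incl)
    then show ?thesis
      using assms(4) \<open>?K \<subseteq> H\<close> \<open>finite H\<close> card_mono[of ?K "{\<one>, g}"] finite_subset by fastforce
  qed
  ultimately have "card ?K = card H"
    using assms(2) unfolding prime_nat_iff by blast
  then show ?thesis
    using \<open>?K \<subseteq> H\<close> \<open>finite H\<close> card_subset_eq by blast
qed

end

section \<open>The group GL(2, q)\<close>

lemma mat2_mult_simps [simp]:
  "mat2_mult q (a, b, c, d) (e, f, g, h) =
     ((a * e + b * g) mod q, (a * f + b * h) mod q, (c * e + d * g) mod q, (c * f + d * h) mod q)"
  by (simp add: mat2_mult_def)

lemma mat2_det_simps [simp]: "mat2_det (a, b, c, d) = a * d - b * c"
  by (simp add: mat2_det_def)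

lemma mod_add_mult_mod_eq:
  fixes m :: int
  shows "(a * (x mod m) + b * (y mod m)) mod m = (a * x + b * y) mod m"
    and "((x mod m) * a + (y mod m) * b) mod m = (x * a + y * b) mod m"
  by (metis mod_add_eq mod_mult_right_eq, metis mod_add_eq mod_mult_left_eq)

lemma mod_diff_mult_mod_eq:
  fixes m :: int
  shows "((a mod m) * (b mod m) - (c mod m) * (d mod m)) mod m = (a * b - c * d) mod m"
  by (metis mod_diff_eq mod_mult_eq)

lemma mat2_det_mult_mod:
  "mat2_det (mat2_mult q A B) mod q = (mat2_det A * mat2_det B) mod q"
proof -
  obtain a b c d e f g h where "A = (a, b, c, d)" "B = (e, f, g, h)"
    by (cases A, cases B) auto
  moreover have "(a * e + b * g) * (c * f + d * h) - (a * f + b * h) * (c * e + d * g) =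
      (a * d - b * c) * (e * h - f * g)"
    by (simp add: algebra_simps)
  ultimately show ?thesis
    by (simp add: mod_diff_mult_mod_eq)
qed

definition mat2_trace :: "mat2 \<Rightarrow> int" where
  "mat2_trace A = (case A of (a, b, c, d) \<Rightarrow> a + d)"

lemma mat2_trace_mult_commute_mod:
  "mat2_trace (mat2_mult q A B) mod q = mat2_trace (mat2_mult q B A) mod q"
proof -
  obtain a b c d e f g h where "A = (a, b, c, d)" "B = (e, f, g, h)"
    by (cases A, cases B) auto
  then show ?thesis
    by (simp add: mat2_trace_def mod_add_eq, simp add: algebra_simps)
qed

lemma cong_sum_prod_prime_int:
  fixes m x y u v :: int
  assumes "Factorial_Ring.prime m" and "[x + y = u + v] (mod m)" and "[x * y = u * v] (mod m)"
  shows "[x = u] (mod m) \<and> [y = v] (mod m) \<or> [x = v] (mod m) \<and> [y = u] (mod m)"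
proof -
  have sum: "m dvd x + y - u - v" and prod: "m dvd x * y - u * v"
    using assms(2,3) by (simp_all add: cong_iff_dvd_diff algebra_simps)
  have "(x - u) * (x - v) = x * (x + y - u - v) - (x * y - u * v)"
    by (simp add: algebra_simps)
  then have "m dvd (x - u) * (x - v)"
    using sum prod by simp
  then have "m dvd x - u \<or> m dvd x - v"
    using assms(1) by (simp add: prime_dvd_mult_iff)
  moreover have "y - v = (x + y - u - v) - (x - u)" "y - u = (x + y - u - v) - (x - v)"
    by simp_all
  ultimately show ?thesis
    using sum by (metis cong_iff_dvd_diff dvd_diff)
qed

definition mat2_diag :: "int \<Rightarrow> int \<Rightarrow> mat2" where
  "mat2_diag x y = (x, 0, 0, y)"

definition mat2_swap :: mat2 where
  "mat2_swap = (0, 1, 1, 0)"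

locale gl2 =
  fixes q :: nat
  assumes prime_q: "Factorial_Ring.prime q"
begin

abbreviation Q :: int where "Q \<equiv> int q"

abbreviation G :: "mat2 monoid" where "G \<equiv> GL2 Q"

lemma Q_gt_1: "Q > 1"
  using prime_q prime_gt_1_nat by simp

lemma GL2_carrier_iff: "A \<in> carrier G \<longleftrightarrow> mat2_entries_in Q A \<and> mat2_det A mod Q \<noteq> 0"
  by (simp add: GL2_def)

lemma GL2_mult: "A \<otimes>\<^bsub>G\<^esub> B = mat2_mult Q A B"
  by (simp add: GL2_def)

lemma GL2_one: "\<one>\<^bsub>G\<^esub> = (1, 0, 0, 1)"
  by (simp add: GL2_def)

lemma mult_mod_nonzero: "x mod Q \<noteq> 0 \<Longrightarrow> y mod Q \<noteq> 0 \<Longrightarrow> (x * y) mod Q \<noteq> 0"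
  using prime_q by (simp add: mod_eq_0_iff_dvd prime_dvd_mult_iff)

lemma inverse_mod_exists:
  assumes "x mod Q \<noteq> 0"
  obtains u where "(x * u) mod Q = 1"
proof -
  have "coprime x Q"
    using assms prime_q prime_imp_coprime[of Q x] by (simp add: coprime_commute mod_eq_0_iff_dvd)
  then obtain u where "[x * u = 1] (mod Q)"
    using cong_solve_coprime_int by blast
  then show ?thesis
    using that Q_gt_1 by (simp add: cong_def)
qed

lemma group_GL2: "group G"
proof (rule groupI)
  fix A B assume "A \<in> carrier G" "B \<in> carrier G"
  then show "A \<otimes>\<^bsub>G\<^esub> B \<in> carrier G"
    using Q_gt_1 mat2_det_mult_mod[of Q A B] mult_mod_nonzero
    by (cases A, cases B) (auto simp: GL2_mult GL2_carrier_iff mat2_entries_in_def)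
next
  show "\<one>\<^bsub>G\<^esub> \<in> carrier G"
    using Q_gt_1 by (simp add: GL2_one GL2_carrier_iff mat2_entries_in_def)
next
  fix A B C assume "A \<in> carrier G" "B \<in> carrier G" "C \<in> carrier G"
  show "A \<otimes>\<^bsub>G\<^esub> B \<otimes>\<^bsub>G\<^esub> C = A \<otimes>\<^bsub>G\<^esub> (B \<otimes>\<^bsub>G\<^esub> C)"
    by (cases A, cases B, cases C) (simp add: GL2_mult mod_add_mult_mod_eq, simp add: algebra_simps)
next
  fix A assume "A \<in> carrier G"
  then show "\<one>\<^bsub>G\<^esub> \<otimes>\<^bsub>G\<^esub> A = A"
    by (cases A) (simp add: GL2_one GL2_mult GL2_carrier_iff mat2_entries_in_def)
next
  fix A assume A: "A \<in> carrier G"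
  obtain a b c d where A_def: "A = (a, b, c, d)"
    by (cases A) auto
  obtain u where u: "((a * d - b * c) * u) mod Q = 1"
    using A inverse_mod_exists by (auto simp: A_def GL2_carrier_iff)
  define B where "B = ((d * u) mod Q, (-b * u) mod Q, (-c * u) mod Q, (a * u) mod Q)"
  have "B \<otimes>\<^bsub>G\<^esub> A = (((a * d - b * c) * u) mod Q, 0, 0, ((a * d - b * c) * u) mod Q)"
    by (simp add: GL2_mult A_def B_def mod_add_mult_mod_eq, simp add: algebra_simps)
  then have BA: "B \<otimes>\<^bsub>G\<^esub> A = \<one>\<^bsub>G\<^esub>"
    using u by (simp add: GL2_one)
  have "(mat2_det B * mat2_det A) mod Q = 1"
    using mat2_det_mult_mod[of Q B A] BA Q_gt_1 by (simp add: GL2_mult GL2_one)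
  then have "mat2_det B mod Q \<noteq> 0"
    by (metis mod_mult_left_eq mult_zero_left mod_0 zero_neq_one)
  then have "B \<in> carrier G"
    using Q_gt_1 by (simp add: GL2_carrier_iff B_def mat2_entries_in_def)
  with BA show "\<exists>B\<in>carrier G. B \<otimes>\<^bsub>G\<^esub> A = \<one>\<^bsub>G\<^esub>" by blast
qed

sublocale GL2: group G
  by (rule group_GL2)

lemma finite_GL2: "finite (carrier G)"
proof (rule finite_subset)
  show "carrier G \<subseteq> {0..<Q} \<times> {0..<Q} \<times> {0..<Q} \<times> {0..<Q}"
    by (auto simp: GL2_carrier_iff mat2_entries_in_def)
qed simp

lemma mat2_diag_in_GL2:
  assumes "0 < x" "x < Q" "0 < y" "y < Q"
  shows "mat2_diag x y \<in> carrier G"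
  using assms mult_mod_nonzero[of x y] by (simp add: mat2_diag_def GL2_carrier_iff mat2_entries_in_def)

lemma mat2_diag_mult:
  "mat2_mult Q (mat2_diag x y) (mat2_diag x' y') = mat2_diag ((x * x') mod Q) ((y * y') mod Q)"
  by (simp add: mat2_diag_def)

lemma mat2_diag_pow:
  assumes "0 \<le> x" "x < Q" "0 \<le> y" "y < Q"
  shows "mat2_diag x y [^]\<^bsub>G\<^esub> (n::nat) = mat2_diag (x ^ n mod Q) (y ^ n mod Q)"
proof (induction n)
  case 0
  then show ?case using Q_gt_1 by (simp add: GL2_one mat2_diag_def)
next
  case (Suc n)
  then show ?case
    using assms by (simp add: GL2_mult mat2_diag_mult mod_mult_left_eq mult.commute[of "_ ^ n"])
qed

lemma mat2_swap_in_GL2: "mat2_swap \<in> carrier G"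
  using Q_gt_1 by (simp add: mat2_swap_def GL2_carrier_iff mat2_entries_in_def zmod_minus1)

lemma conj_swap_mat2_diag:
  assumes "0 \<le> x" "x < Q" "0 \<le> y" "y < Q"
  shows "conj_elem G mat2_swap (mat2_diag x y) = mat2_diag y x"
proof -
  have "mat2_swap \<otimes>\<^bsub>G\<^esub> mat2_swap = \<one>\<^bsub>G\<^esub>"
    using Q_gt_1 by (simp add: GL2_mult GL2_one mat2_swap_def)
  then have "inv\<^bsub>G\<^esub> mat2_swap = mat2_swap"
    using mat2_swap_in_GL2 by (simp add: GL2.inv_equality)
  then show ?thesis
    using assms by (simp add: GL2_mult conj_elem_def mat2_swap_def mat2_diag_def)
qed

lemma conj_elem_invariant_mod:
  assumes "P \<in> carrier G" "A \<in> carrier G" and "\<And>M N. f (mat2_mult Q M N) mod Q = f (mat2_mult Q N M) mod Q"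
  shows "f (conj_elem G P A) mod Q = f A mod Q"
proof -
  have "f (conj_elem G P A) mod Q = f (inv\<^bsub>G\<^esub> P \<otimes>\<^bsub>G\<^esub> (P \<otimes>\<^bsub>G\<^esub> A)) mod Q"
    using assms(3) by (simp add: conj_elem_def GL2_mult)
  also have "inv\<^bsub>G\<^esub> P \<otimes>\<^bsub>G\<^esub> (P \<otimes>\<^bsub>G\<^esub> A) = A"
    using assms(1,2) by (simp add: GL2.m_assoc[symmetric])
  finally show ?thesis .
qed

lemma mat2_trace_conj_elem_mod:
  "P \<in> carrier G \<Longrightarrow> A \<in> carrier G \<Longrightarrow> mat2_trace (conj_elem G P A) mod Q = mat2_trace A mod Q"
  using conj_elem_invariant_mod mat2_trace_mult_commute_mod by blast

lemma mat2_det_conj_elem_mod: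
  "P \<in> carrier G \<Longrightarrow> A \<in> carrier G \<Longrightarrow> mat2_det (conj_elem G P A) mod Q = mat2_det A mod Q"
  using conj_elem_invariant_mod[of P A mat2_det] by (simp add: mat2_det_mult_mod mult.commute)

end

section \<open>Diagonalization via the projective line\<close>

definition mat2_apply :: "int \<Rightarrow> mat2 \<Rightarrow> int \<times> int \<Rightarrow> int \<times> int" where
  "mat2_apply q A v = (case A of (a, b, c, d) \<Rightarrow> case v of (x, y) \<Rightarrow>
     ((a * x + b * y) mod q, (c * x + d * y) mod q))"

lemma mat2_apply_simps [simp]:
  "mat2_apply q (a, b, c, d) (x, y) = ((a * x + b * y) mod q, (c * x + d * y) mod q)"
  by (simp add: mat2_apply_def)

definition vec_smult :: "int \<Rightarrow> int \<Rightarrow> int \<times> int \<Rightarrow> int \<times> int" where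
  "vec_smult q c v = ((c * fst v) mod q, (c * snd v) mod q)"

definition vec_mod :: "int \<Rightarrow> int \<times> int \<Rightarrow> int \<times> int" where
  "vec_mod q v = (fst v mod q, snd v mod q)"

definition vec_nonzero :: "int \<Rightarrow> int \<times> int \<Rightarrow> bool" where
  "vec_nonzero q v \<longleftrightarrow> fst v mod q \<noteq> 0 \<or> snd v mod q \<noteq> 0"

text \<open>Points of the projective line over \<open>Z/(q)\<close> are represented by the vectors \<open>(1, s)\<close>
  and \<open>(0, 1)\<close>; for prime \<open>q\<close>, \<open>x ^ (q - 2)\<close> inverts \<open>x\<close> modulo \<open>q\<close>.\<close>

definition proj_line :: "int \<Rightarrow> (int \<times> int) set" where
  "proj_line q = Pair 1 ` {0..<q} \<union> {(0, 1)}"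

definition proj_normalize :: "int \<Rightarrow> int \<times> int \<Rightarrow> int \<times> int" where
  "proj_normalize q v =
     (if fst v mod q \<noteq> 0 then (1, (snd v * fst v ^ (nat q - 2)) mod q) else (0, 1))"

definition proj_map :: "int \<Rightarrow> mat2 \<Rightarrow> int \<times> int \<Rightarrow> int \<times> int" where
  "proj_map q A v = proj_normalize q (mat2_apply q A v)"

lemma mat2_apply_mult: "mat2_apply q (mat2_mult q A B) v = mat2_apply q A (mat2_apply q B v)"
  by (cases A, cases B, cases v) (simp add: mod_add_mult_mod_eq, simp add: algebra_simps)

lemma mat2_apply_vec_smult: "mat2_apply q A (vec_smult q c v) = vec_smult q c (mat2_apply q A v)"
  by (cases A, cases v)
    (simp add: vec_smult_def mod_add_mult_mod_eq mod_mult_right_eq, simp add: algebra_simps)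

lemma mat2_apply_vec_mod: "mat2_apply q A (vec_mod q v) = mat2_apply q A v"
  by (cases A, cases v) (simp add: vec_mod_def mod_add_mult_mod_eq)

lemma vec_mod_mat2_apply: "vec_mod q (mat2_apply q A v) = mat2_apply q A v"
  by (cases A, cases v) (simp add: vec_mod_def)

lemma finite_proj_line: "finite (proj_line q)"
  by (simp add: proj_line_def)

lemma card_proj_line: "card (proj_line (int q)) = q + 1"
proof -
  have "card (Pair (1::int) ` {0..<int q}) = q"
    by (simp add: card_image inj_on_def)
  moreover have "(0, 1) \<notin> Pair (1::int) ` {0..<int q}"
    by auto
  ultimately show ?thesis
    by (simp add: proj_line_def)
qed

lemma proj_normalize_in_proj_line: "q > 1 \<Longrightarrow> proj_normalize q v \<in> proj_line q"
  by (auto simp: proj_normalize_def proj_line_def)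

lemma proj_line_normal:
  assumes "q > 1" and "w \<in> proj_line q"
  shows "proj_normalize q w = w" and "vec_nonzero q w" and "vec_mod q w = w"
  using assms by (auto simp: proj_line_def proj_normalize_def vec_nonzero_def vec_mod_def)

context gl2
begin

lemma pow_q_minus_1_mod:
  assumes "x mod Q \<noteq> 0"
  shows "x ^ (q - 1) mod Q = 1"
proof -
  define n where "n = nat (x mod Q)"
  have n: "x mod Q = int n"
    using Q_gt_1 by (simp add: n_def)
  have "0 < n" "n < q"
    using assms Q_gt_1 n pos_mod_bound[of Q x] by linarith+
  then have "[n ^ (q - 1) = 1] (mod q)"
    using prime_q fermat_theorem nat_dvd_not_less by blast
  then have "int n ^ (q - 1) mod Q = 1"
    using Q_gt_1 by (simp add: cong_def flip: of_nat_power of_nat_mod)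
  then show ?thesis
    by (metis n power_mod)
qed

lemma mult_pow_q_minus_2_mod:
  assumes "x mod Q \<noteq> 0"
  shows "(x * x ^ (q - 2)) mod Q = 1"
proof -
  have "q - 1 = Suc (q - 2)"
    using prime_ge_2_nat[OF prime_q] by simp
  then show ?thesis
    using pow_q_minus_1_mod[OF assms] by simp
qed

lemma vec_nonzero_mat2_apply:
  assumes "A \<in> carrier G" and "vec_nonzero Q v"
  shows "vec_nonzero Q (mat2_apply Q A v)"
proof (rule ccontr)
  obtain a b c d x y where A: "A = (a, b, c, d)" and v: "v = (x, y)"
    by (cases A, cases v) auto
  assume "\<not> vec_nonzero Q (mat2_apply Q A v)"
  then have h: "Q dvd a * x + b * y" "Q dvd c * x + d * y"
    by (auto simp: vec_nonzero_def A v mod_eq_0_iff_dvd)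
  have det: "\<not> Q dvd a * d - b * c"
    using assms(1) by (simp add: A GL2_carrier_iff mod_eq_0_iff_dvd)
  have "(a * d - b * c) * x = d * (a * x + b * y) - b * (c * x + d * y)"
    "(a * d - b * c) * y = a * (c * x + d * y) - c * (a * x + b * y)"
    by (simp_all add: algebra_simps)
  then have "Q dvd (a * d - b * c) * x" "Q dvd (a * d - b * c) * y"
    using h by simp_all
  then have "Q dvd x" "Q dvd y"
    using det prime_q by (simp_all add: prime_dvd_mult_iff)
  then show False
    using assms(2) by (simp add: vec_nonzero_def v mod_eq_0_iff_dvd)
qed

lemma proj_normalize_vec_smult:
  assumes "c mod Q \<noteq> 0"
  shows "proj_normalize Q (vec_smult Q c v) = proj_normalize Q v"
proof (cases "fst v mod Q = 0")
  case True
  then have "(c * fst v) mod Q = 0"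
    by (simp add: mod_mult_right_eq[symmetric])
  then show ?thesis
    using True by (simp add: proj_normalize_def vec_smult_def)
next
  case False
  obtain x y where v: "v = (x, y)"
    by (cases v) auto
  have "((c * y) mod Q * ((c * x) mod Q) ^ (q - 2)) mod Q = (c * y * (c * x) ^ (q - 2)) mod Q"
    by (metis mod_mult_left_eq mod_mult_right_eq power_mod)
  also have "c * y * (c * x) ^ (q - 2) = (c * c ^ (q - 2)) * (y * x ^ (q - 2))"
    by (simp add: power_mult_distrib ac_simps)
  also have "(c * c ^ (q - 2) * (y * x ^ (q - 2))) mod Q = (y * x ^ (q - 2)) mod Q"
    using mult_pow_q_minus_2_mod[OF assms] mod_mult_left_eq[of "c * c ^ (q - 2)" Q] by simp
  finally have "((c * y) mod Q * ((c * x) mod Q) ^ (q - 2)) mod Q = (y * x ^ (q - 2)) mod Q" .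
  then show ?thesis
    using False mult_mod_nonzero[OF assms False] by (simp add: proj_normalize_def vec_smult_def v)
qed

lemma proj_normalize_scaling:
  assumes "vec_nonzero Q v"
  obtains c where "c mod Q \<noteq> 0" and "vec_smult Q c (proj_normalize Q v) = vec_mod Q v"
proof (cases "fst v mod Q = 0")
  case True
  then show ?thesis
    using assms that[of "snd v"] by (simp add: vec_nonzero_def proj_normalize_def vec_smult_def vec_mod_def)
next
  case False
  obtain x y where v: "v = (x, y)"
    by (cases v) auto
  have "(x * ((y * x ^ (q - 2)) mod Q)) mod Q = ((x * x ^ (q - 2)) * y) mod Q"
    by (simp add: mod_mult_right_eq ac_simps)
  also have "\<dots> = y mod Q"
    using mult_pow_q_minus_2_mod[of x] False v mod_mult_left_eq[of "x * x ^ (q - 2)" Q] by simp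
  finally show ?thesis
    using False that[of x] by (simp add: proj_normalize_def vec_smult_def vec_mod_def v)
qed

lemma proj_normalize_mat2_apply:
  assumes "A \<in> carrier G" and "vec_nonzero Q v"
  shows "proj_normalize Q (mat2_apply Q A (proj_normalize Q v)) = proj_normalize Q (mat2_apply Q A v)"
proof -
  obtain c where "c mod Q \<noteq> 0" and c: "vec_smult Q c (proj_normalize Q v) = vec_mod Q v"
    using proj_normalize_scaling[OF assms(2)] by blast
  have "mat2_apply Q A v = vec_smult Q c (mat2_apply Q A (proj_normalize Q v))"
    by (simp flip: mat2_apply_vec_smult mat2_apply_vec_mod[of Q A v] add: c)
  then show ?thesis
    using proj_normalize_vec_smult[OF \<open>c mod Q \<noteq> 0\<close>] by simp
qed

lemma funpow_proj_map:
  assumes "A \<in> carrier G" and "w \<in> proj_line Q"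
  shows "(proj_map Q A ^^ n) w = proj_map Q (A [^]\<^bsub>G\<^esub> n) w"
proof (induction n)
  case 0
  then show ?case
    using Q_gt_1 proj_line_normal[OF _ assms(2)] by (cases w) (simp add: proj_map_def GL2_one vec_mod_def)
next
  case (Suc n)
  have "A [^]\<^bsub>G\<^esub> n \<in> carrier G"
    using assms(1) by simp
  then have "vec_nonzero Q (mat2_apply Q (A [^]\<^bsub>G\<^esub> n) w)"
    using vec_nonzero_mat2_apply proj_line_normal(2)[OF Q_gt_1 assms(2)] by blast
  moreover have "A [^]\<^bsub>G\<^esub> Suc n = A \<otimes>\<^bsub>G\<^esub> A [^]\<^bsub>G\<^esub> n"
    using assms(1) by (rule GL2.nat_pow_Suc2)
  ultimately show ?case
    using Suc assms(1) by (simp add: proj_map_def proj_normalize_mat2_apply GL2_mult mat2_apply_mult)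
qed

lemma proj_map_fixed_eigenvector:
  assumes "A \<in> carrier G" and "w \<in> proj_line Q" and "proj_map Q A w = w"
  obtains m where "0 < m" "m < Q" "mat2_apply Q A w = vec_smult Q m w"
proof -
  have "vec_nonzero Q (mat2_apply Q A w)"
    using vec_nonzero_mat2_apply[OF assms(1)] proj_line_normal(2)[OF Q_gt_1 assms(2)] .
  then obtain c where "c mod Q \<noteq> 0" and c: "vec_smult Q c w = mat2_apply Q A w"
    using proj_normalize_scaling assms(3) vec_mod_mat2_apply by (metis proj_map_def)
  moreover have "vec_smult Q c w = vec_smult Q (c mod Q) w"
    by (simp add: vec_smult_def mod_mult_left_eq)
  moreover have "0 \<le> c mod Q" "c mod Q < Q"
    using Q_gt_1 by simp_all
  ultimately show ?thesis
    using that[of "c mod Q"] by simp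
qed

lemma proj_line_det_nonzero:
  assumes "w1 \<in> proj_line Q" "w2 \<in> proj_line Q" "w1 \<noteq> w2"
  shows "(fst w1 * snd w2 - fst w2 * snd w1) mod Q \<noteq> 0"
proof -
  have small: "d mod Q \<noteq> 0" if "d \<noteq> 0" "-Q < d" "d < Q" for d
  proof
    assume "d mod Q = 0"
    then have "\<bar>Q\<bar> \<le> \<bar>d\<bar>"
      using that(1) dvd_imp_le_int[of d Q] by (simp add: mod_eq_0_iff_dvd)
    then show False
      using that by auto
  qed
  consider (both) s t where "w1 = (1, s)" "w2 = (1, t)" "0 \<le> s" "s < Q" "0 \<le> t" "t < Q"
    | (left) s where "w1 = (1, s)" "w2 = (0, 1)"
    | (right) s where "w1 = (0, 1)" "w2 = (1, s)"
    using assms by (fastforce simp: proj_line_def)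
  then show ?thesis
  proof cases
    case both
    then have "t - s \<noteq> 0"
      using assms(3) by auto
    then show ?thesis
      using both small[of "t - s"] by auto
  qed (use Q_gt_1 in \<open>simp_all add: zmod_minus1\<close>)
qed

lemma conj_diag_of_eigenvectors:
  assumes "A \<in> carrier G" and "w1 \<in> proj_line Q" "w2 \<in> proj_line Q" "w1 \<noteq> w2"
    and "0 < m1" "m1 < Q" "mat2_apply Q A w1 = vec_smult Q m1 w1"
    and "0 < m2" "m2 < Q" "mat2_apply Q A w2 = vec_smult Q m2 w2"
  shows "\<exists>P\<in>carrier G. conj_elem G P A = mat2_diag m1 m2"
proof -
  obtain x1 y1 x2 y2 where w: "w1 = (x1, y1)" "w2 = (x2, y2)"
    by (cases w1, cases w2) auto
  define P where "P = (x1, x2, y1, y2)"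
  have "P \<in> carrier G"
    using proj_line_det_nonzero[OF assms(2-4)] assms(2,3) Q_gt_1
    by (auto simp: P_def w GL2_carrier_iff proj_line_def mat2_entries_in_def)
  have D: "mat2_diag m1 m2 \<in> carrier G"
    using assms by (intro mat2_diag_in_GL2)
  have AP: "A \<otimes>\<^bsub>G\<^esub> P = P \<otimes>\<^bsub>G\<^esub> mat2_diag m1 m2"
    using assms(7,10) by (cases A) (simp add: w P_def mat2_diag_def GL2_mult vec_smult_def mult.commute)
  have "conj_elem G (inv\<^bsub>G\<^esub> P) A = inv\<^bsub>G\<^esub> P \<otimes>\<^bsub>G\<^esub> (A \<otimes>\<^bsub>G\<^esub> P)"
    using \<open>P \<in> carrier G\<close> assms(1) by (simp add: conj_elem_def GL2.m_assoc)
  also have "\<dots> = mat2_diag m1 m2"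
    using \<open>P \<in> carrier G\<close> D by (simp add: AP GL2.m_assoc[symmetric])
  finally have "conj_elem G (inv\<^bsub>G\<^esub> P) A = mat2_diag m1 m2" .
  then show ?thesis
    using \<open>P \<in> carrier G\<close> by blast
qed

end

locale gl2_prime_order = gl2 +
  fixes p :: nat
  assumes prime_p: "Factorial_Ring.prime p" and p_gt_2: "p > 2" and p_dvd: "p dvd q - 1"
begin

text \<open>The points not fixed by \<open>A\<close> fall into orbits of size \<open>p\<close>, and \<open>q + 1 \<equiv> 2 (mod p)\<close>.\<close>

lemma two_le_card_proj_fixed:
  assumes "A \<in> carrier G" and "A [^]\<^bsub>G\<^esub> p = \<one>\<^bsub>G\<^esub>"
  shows "2 \<le> card {w \<in> proj_line Q. proj_map Q A w = w}"
proof (rule ccontr)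
  let ?F = "{w \<in> proj_line Q. proj_map Q A w = w}"
  assume "\<not> 2 \<le> card ?F"
  have "proj_map Q A ` proj_line Q \<subseteq> proj_line Q"
    using Q_gt_1 by (auto simp: proj_map_def proj_normalize_in_proj_line)
  moreover have "(proj_map Q A ^^ p) w = w" if "w \<in> proj_line Q" for w
    using funpow_proj_map[OF assms(1) that] assms(2) proj_line_normal[OF Q_gt_1 that]
    by (cases w) (simp add: proj_map_def GL2_one vec_mod_def)
  ultimately have "p dvd card (proj_line Q) - card ?F"
    by (intro prime_period_dvd_card_diff_fixed[OF prime_p finite_proj_line])
  then have "p dvd (q + 1) - card ?F"
    by (simp add: card_proj_line)
  then have "p dvd ((q + 1) - card ?F) - (q - 1)"
    using p_dvd by (rule dvd_diff_nat)
  moreover have "((q + 1) - card ?F) - (q - 1) = 2 - card ?F"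
    using \<open>\<not> 2 \<le> card ?F\<close> prime_ge_2_nat[OF prime_q] by simp
  moreover have "0 < 2 - card ?F"
    using \<open>\<not> 2 \<le> card ?F\<close> by simp
  ultimately have "p \<le> 2 - card ?F"
    by (simp add: dvd_imp_le)
  then show False
    using p_gt_2 by simp
qed

lemma conj_diag_of_pow_eq_one:
  assumes "A \<in> carrier G" and "A [^]\<^bsub>G\<^esub> p = \<one>\<^bsub>G\<^esub>"
  obtains P m1 m2 where "P \<in> carrier G" "0 < m1" "m1 < Q" "0 < m2" "m2 < Q"
    "conj_elem G P A = mat2_diag m1 m2"
proof -
  let ?F = "{w \<in> proj_line Q. proj_map Q A w = w}"
  have "finite ?F"
    by (simp add: finite_proj_line)
  moreover have "\<not> card ?F \<le> Suc 0"
    using two_le_card_proj_fixed[OF assms] by simp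
  ultimately obtain w1 w2 where "w1 \<in> ?F" "w2 \<in> ?F" "w1 \<noteq> w2"
    by (auto simp: card_le_Suc0_iff_eq)
  obtain m1 where "0 < m1" "m1 < Q" "mat2_apply Q A w1 = vec_smult Q m1 w1"
    using proj_map_fixed_eigenvector[OF assms(1)] \<open>w1 \<in> ?F\<close> by blast
  moreover obtain m2 where "0 < m2" "m2 < Q" "mat2_apply Q A w2 = vec_smult Q m2 w2"
    using proj_map_fixed_eigenvector[OF assms(1)] \<open>w2 \<in> ?F\<close> by blast
  ultimately obtain P where "P \<in> carrier G" "conj_elem G P A = mat2_diag m1 m2"
    using conj_diag_of_eigenvectors[OF assms(1)] \<open>w1 \<in> ?F\<close> \<open>w2 \<in> ?F\<close> \<open>w1 \<noteq> w2\<close>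
    by (metis (no_types, lifting) mem_Collect_eq)
  then show ?thesis
    using that \<open>0 < m1\<close> \<open>m1 < Q\<close> \<open>0 < m2\<close> \<open>m2 < Q\<close> by blast
qed

end

section \<open>Subgroups of order p\<close>

locale gl2_root = gl2 +
  fixes p lam :: nat
  assumes prime_p: "Factorial_Ring.prime p" and p_gt_2: "p > 2"
    and lam_less: "lam < q" and ord_lam: "ord q lam = p"
begin

lemma coprime_q_lam: "coprime q lam"
  using ord_lam p_gt_2 ord_eq_0[of q lam] by auto

sublocale gl2_prime_order q p
proof
  show "p dvd q - 1"
    using order_divides_totient[OF coprime_q_lam] ord_lam totient_prime[OF prime_q] by simp
qed (use prime_p p_gt_2 in auto)

definition lam_pow :: "nat \<Rightarrow> int" where
  "lam_pow k = int (lam ^ k mod q)"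

lemma lam_pow_bounds: "0 < lam_pow k" "lam_pow k < Q"
proof -
  have "\<not> q dvd lam ^ k"
    using coprime_q_lam prime_q by (metis coprime_power_right_iff coprime_absorb_left not_prime_unit)
  then show "0 < lam_pow k" "lam_pow k < Q"
    using Q_gt_1 by (auto simp: lam_pow_def mod_eq_0_iff_dvd[symmetric])
qed

lemma lam_pow_mod [simp]: "lam_pow k mod Q = lam_pow k"
  using lam_pow_bounds[of k] by simp

lemma lam_pow_0: "lam_pow 0 = 1"
  using Q_gt_1 by (simp add: lam_pow_def)

lemma lam_pow_power: "lam_pow k ^ n mod Q = lam_pow (k * n)"
  by (simp add: lam_pow_def power_mod power_mult flip: of_nat_power of_nat_mod)

lemma lam_pow_eq_iff: "lam_pow i = lam_pow j \<longleftrightarrow> [i = j] (mod p)"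
  using order_divides_expdiff[OF coprime_q_lam, of i j] ord_lam
  by (simp add: lam_pow_def cong_def flip: of_nat_mod)

lemma roots_of_unity_mod_q: "{x \<in> {..<q}. [x ^ p = 1] (mod q)} = (\<lambda>k. lam ^ k mod q) ` {..<p}"
proof (rule sym, rule card_seteq)
  have "card {x \<in> {..<q}. [x ^ p = 1] (mod q)} \<le> p"
    using prime_q p_gt_2 by (intro roots_mod_prime_bound) auto
  also have "\<dots> = card ((\<lambda>k. lam ^ k mod q) ` {..<p})"
    using inj_power_mod[OF coprime_q_lam] ord_lam by (simp add: card_image)
  finally show "card {x \<in> {..<q}. [x ^ p = 1] (mod q)} \<le> card ((\<lambda>k. lam ^ k mod q) ` {..<p})" .
  show "(\<lambda>k. lam ^ k mod q) ` {..<p} \<subseteq> {x \<in> {..<q}. [x ^ p = 1] (mod q)}"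
  proof safe
    fix k
    have "[(lam ^ p) ^ k = 1 ^ k] (mod q)"
      using ord[of lam q] ord_lam by (intro cong_pow) simp
    then show "[(lam ^ k mod q) ^ p = 1] (mod q)"
      by (simp add: cong_def power_mod flip: power_mult) (simp add: mult.commute)
  qed (use prime_q prime_gt_0_nat in auto)
qed auto

lemma root_of_unity_eq_lam_pow:
  assumes "0 < m" "m < Q" "m ^ p mod Q = 1"
  obtains k where "m = lam_pow k"
proof -
  have "nat (m ^ p) mod q = nat (m ^ p mod Q)"
    using assms(1) by (simp add: nat_mod_distrib)
  then have "nat m \<in> {x \<in> {..<q}. [x ^ p = 1] (mod q)}"
    using assms by (simp add: cong_def nat_less_iff nat_power_eq[symmetric])
  then obtain k where "nat m = lam ^ k mod q"
    unfolding roots_of_unity_mod_q by auto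
  then show ?thesis
    using that[of k] assms(1) by (simp add: lam_pow_def)
qed

definition diag_lam :: "nat \<Rightarrow> nat \<Rightarrow> mat2" where
  "diag_lam a b = mat2_diag (lam_pow a) (lam_pow b)"

definition diag_subgroup :: "nat \<Rightarrow> nat \<Rightarrow> mat2 set" where
  "diag_subgroup a b = generate G {diag_lam a b}"

lemma diag_lam_in_GL2: "diag_lam a b \<in> carrier G"
  unfolding diag_lam_def by (intro mat2_diag_in_GL2 lam_pow_bounds)

lemma diag_lam_pow: "diag_lam a b [^]\<^bsub>G\<^esub> (n::nat) = diag_lam (a * n) (b * n)"
  using lam_pow_bounds[of a] lam_pow_bounds[of b]
  by (simp add: diag_lam_def mat2_diag_pow lam_pow_power)

lemma diag_lam_eq_iff: "diag_lam a b = diag_lam c d \<longleftrightarrow> [a = c] (mod p) \<and> [b = d] (mod p)"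
  by (simp add: diag_lam_def mat2_diag_def lam_pow_eq_iff)

lemma diag_lam_0_0: "diag_lam 0 0 = \<one>\<^bsub>G\<^esub>"
  by (simp add: diag_lam_def mat2_diag_def lam_pow_0 GL2_one)

lemma ord_diag_lam:
  assumes "\<not> (p dvd a \<and> p dvd b)"
  shows "GL2.ord (diag_lam a b) = p"
proof -
  have "GL2.ord (diag_lam a b) dvd n \<longleftrightarrow> p dvd n" for n
  proof -
    have "GL2.ord (diag_lam a b) dvd n \<longleftrightarrow> diag_lam (a * n) (b * n) = diag_lam 0 0"
      by (simp add: GL2.pow_eq_id[OF diag_lam_in_GL2, symmetric] diag_lam_pow diag_lam_0_0)
    also have "\<dots> \<longleftrightarrow> p dvd n"
      using assms prime_p by (auto simp: diag_lam_eq_iff cong_0_iff prime_dvd_mult_iff)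
    finally show ?thesis .
  qed
  then show ?thesis
    by (metis dvd_antisym dvd_refl)
qed

lemma diag_subgroup_eq: "diag_subgroup a b = range (\<lambda>k. diag_lam (a * k) (b * k))"
  using GL2.generate_pow_on_finite_carrier[OF finite_GL2 diag_lam_in_GL2]
  by (auto simp: diag_subgroup_def diag_lam_pow)

lemma subgroup_diag_subgroup: "subgroup (diag_subgroup a b) G"
  unfolding diag_subgroup_def using diag_lam_in_GL2 by (intro GL2.generate_is_subgroup) auto

lemma diag_subgroup_subset: "diag_subgroup a b \<subseteq> carrier G"
  using subgroup_diag_subgroup subgroup.subset by blast

lemma card_diag_subgroup: "\<not> (p dvd a \<and> p dvd b) \<Longrightarrow> card (diag_subgroup a b) = p"
  using GL2.generate_pow_card[OF diag_lam_in_GL2] ord_diag_lam by (simp add: diag_subgroup_def)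

lemma diag_subgroup_cong: "[a = a'] (mod p) \<Longrightarrow> [b = b'] (mod p) \<Longrightarrow> diag_subgroup a b = diag_subgroup a' b'"
  unfolding diag_subgroup_def using diag_lam_eq_iff by metis

lemma diag_subgroup_scale:
  assumes "\<not> (p dvd a \<and> p dvd b)" and "\<not> p dvd c"
  shows "diag_subgroup (a * c) (b * c) = diag_subgroup a b"
proof -
  have "\<not> (p dvd a * c \<and> p dvd b * c)"
    using assms prime_p by (auto simp: prime_dvd_mult_iff)
  moreover have "diag_subgroup (a * c) (b * c) \<subseteq> diag_subgroup a b"
    by (auto simp: diag_subgroup_eq mult.assoc)
  ultimately show ?thesis
    using assms(1) card_diag_subgroup finite_subset[OF diag_subgroup_subset finite_GL2]
    by (metis card_subset_eq)
qed

lemma conj_swap_diag_subgroup: "conj_elem G mat2_swap ` diag_subgroup a b = diag_subgroup b a"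
  using lam_pow_bounds
  by (auto simp: diag_subgroup_eq image_iff diag_lam_def conj_swap_mat2_diag less_imp_le)

lemma conj_subgroups_swap_diag_subgroup: "conj_subgroups G (diag_subgroup a b) (diag_subgroup b a)"
  using mat2_swap_in_GL2 conj_swap_diag_subgroup[of a b, symmetric]
  unfolding conj_subgroups_iff_conj_elem by blast

lemma conj_diag_lam_of_pow_eq_one:
  assumes "g \<in> carrier G" and "g [^]\<^bsub>G\<^esub> p = \<one>\<^bsub>G\<^esub>"
  obtains P a b where "P \<in> carrier G" and "conj_elem G P g = diag_lam a b"
proof -
  obtain P m1 m2 where P: "P \<in> carrier G" and m: "0 < m1" "m1 < Q" "0 < m2" "m2 < Q"
    and Pg: "conj_elem G P g = mat2_diag m1 m2"
    using conj_diag_of_pow_eq_one assms by blast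
  have "mat2_diag m1 m2 [^]\<^bsub>G\<^esub> p = \<one>\<^bsub>G\<^esub>"
    using GL2.conj_elem_pow[OF P assms(1), of p] assms(2) P Pg by simp
  then have "mat2_diag (m1 ^ p mod Q) (m2 ^ p mod Q) = (1, 0, 0, 1)"
    using mat2_diag_pow[of m1 m2 p] m by (simp add: GL2_one)
  then have "m1 ^ p mod Q = 1" "m2 ^ p mod Q = 1"
    by (simp_all add: mat2_diag_def)
  then obtain a b where "m1 = lam_pow a" "m2 = lam_pow b"
    using root_of_unity_eq_lam_pow m by metis
  then show ?thesis
    using that P Pg by (simp add: diag_lam_def)
qed

lemma subgroup_order_p_conj_diag_subgroup:
  assumes "subgroup H G" and "card H = p"
  obtains a b where "\<not> (p dvd a \<and> p dvd b)" and "conj_subgroups G H (diag_subgroup a b)"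
proof -
  have "\<not> H \<subseteq> {\<one>\<^bsub>G\<^esub>}"
    using card_mono[of "{\<one>\<^bsub>G\<^esub>}" H] assms(2) p_gt_2 by auto
  then obtain g where "g \<in> H" "g \<noteq> \<one>\<^bsub>G\<^esub>"
    by blast
  have g: "g \<in> carrier G"
    using subgroup.mem_carrier[OF assms(1) \<open>g \<in> H\<close>] .
  have H: "H = generate G {g}"
    using GL2.subgroup_prime_card_generate[OF assms(1) _ \<open>g \<in> H\<close> \<open>g \<noteq> \<one>\<^bsub>G\<^esub>\<close>] assms(2) prime_p
    by simp
  then have "g [^]\<^bsub>G\<^esub> p = \<one>\<^bsub>G\<^esub>"
    using GL2.generate_pow_card[OF g] GL2.pow_ord_eq_1[OF g] assms(2) by simp
  then obtain P a b where P: "P \<in> carrier G" and Pg: "conj_elem G P g = diag_lam a b"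
    using conj_diag_lam_of_pow_eq_one g by blast
  have "\<not> (p dvd a \<and> p dvd b)"
  proof
    assume "p dvd a \<and> p dvd b"
    then have "conj_elem G P g = \<one>\<^bsub>G\<^esub>"
      using diag_lam_eq_iff[of a b 0 0] by (simp add: Pg cong_0_iff diag_lam_0_0)
    then show False
      using \<open>g \<noteq> \<one>\<^bsub>G\<^esub>\<close> GL2.conj_elem_inv_cancel[OF P g] P by simp
  qed
  moreover have "conj_elem G P ` H = diag_subgroup a b"
    using GL2.conj_elem_image_generate[OF finite_GL2 P g] by (simp add: H Pg diag_subgroup_def)
  ultimately show ?thesis
    using that[of a b] P unfolding conj_subgroups_iff_conj_elem by blast
qed

lemma conj_diag_subgroup_exponents:
  assumes "conj_subgroups G (diag_subgroup a b) (diag_subgroup a' b')"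
  obtains k where "[a = a' * k] (mod p) \<and> [b = b' * k] (mod p) \<or> [a = b' * k] (mod p) \<and> [b = a' * k] (mod p)"
proof -
  obtain P where P: "P \<in> carrier G" and "diag_subgroup a' b' = conj_elem G P ` diag_subgroup a b"
    using assms by (auto simp: conj_subgroups_iff_conj_elem)
  moreover have "diag_lam a b \<in> diag_subgroup a b"
    unfolding diag_subgroup_eq by (rule range_eqI[of _ _ 1]) simp
  ultimately have "conj_elem G P (diag_lam a b) \<in> diag_subgroup a' b'"
    by blast
  then obtain k where k: "conj_elem G P (diag_lam a b) = diag_lam (a' * k) (b' * k)"
    by (auto simp: diag_subgroup_eq)
  have sum: "[lam_pow a + lam_pow b = lam_pow (a' * k) + lam_pow (b' * k)] (mod Q)"
    using mat2_trace_conj_elem_mod[OF P diag_lam_in_GL2, of a b] unfolding k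
    by (simp add: cong_def diag_lam_def mat2_diag_def mat2_trace_def)
  have prod: "[lam_pow a * lam_pow b = lam_pow (a' * k) * lam_pow (b' * k)] (mod Q)"
    using mat2_det_conj_elem_mod[OF P diag_lam_in_GL2, of a b] unfolding k
    by (simp add: cong_def diag_lam_def mat2_diag_def)
  have "lam_pow a = lam_pow (a' * k) \<and> lam_pow b = lam_pow (b' * k) \<or>
      lam_pow a = lam_pow (b' * k) \<and> lam_pow b = lam_pow (a' * k)"
    using cong_sum_prod_prime_int[OF _ sum prod] prime_q by (simp add: cong_def)
  then show ?thesis
    using that by (auto simp: lam_pow_eq_iff)
qed

lemma diag_subgroup_eq_0_1:
  assumes "p dvd a" and "\<not> p dvd b"
  shows "diag_subgroup a b = diag_subgroup 0 1"
proof -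
  have "diag_subgroup a b = diag_subgroup (0 * b) (1 * b)"
    using assms(1) by (intro diag_subgroup_cong) (simp_all add: cong_0_iff)
  also have "\<dots> = diag_subgroup 0 1"
    using assms(2) p_gt_2 by (intro diag_subgroup_scale) auto
  finally show ?thesis .
qed

lemma diag_subgroup_eq_1:
  assumes "\<not> p dvd a" and "\<not> p dvd b"
  obtains k where "\<not> p dvd k" and "diag_subgroup a b = diag_subgroup 1 k"
proof -
  have "coprime a p"
    using assms(1) prime_p prime_imp_coprime[of p a] by (simp add: coprime_commute)
  then obtain a' where a': "[a * a' = 1] (mod p)"
    using cong_solve_coprime_nat by fastforce
  then have "\<not> p dvd a'"
    using p_gt_2 by (auto simp: cong_def)
  then have k: "\<not> p dvd b * a'"
    using assms(2) prime_p by (simp add: prime_dvd_mult_iff)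
  have "[b * 1 = b * a' * a] (mod p)"
    using cong_scalar_left[OF a', of b] by (simp add: cong_sym_eq ac_simps)
  then have "diag_subgroup a b = diag_subgroup (1 * a) (b * a' * a)"
    by (intro diag_subgroup_cong) simp_all
  also have "\<dots> = diag_subgroup 1 (b * a')"
    using assms(1) by (intro diag_subgroup_scale) auto
  finally show ?thesis
    using that k by blast
qed

lemma conj_diag_subgroup_1_rep:
  assumes "inv_pair_reps p S" and "\<not> p dvd k"
  obtains l where "l \<in> {1, p - 1} \<union> S" and "conj_subgroups G (diag_subgroup 1 k) (diag_subgroup 1 l)"
proof -
  define k' where "k' = k mod p"
  have D: "diag_subgroup 1 k = diag_subgroup 1 k'"
    by (intro diag_subgroup_cong) (simp_all add: k'_def cong_def)
  have "0 < k'" "k' < p"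
    using assms(2) p_gt_2 by (simp_all add: k'_def mod_greater_zero_iff_not_dvd)
  have refl: "conj_subgroups G (diag_subgroup 1 k) (diag_subgroup 1 k)"
    by (rule GL2.conj_subgroups_refl[OF diag_subgroup_subset])
  show ?thesis
  proof (cases "k' \<in> {1, p - 1}")
    case True
    then show ?thesis
      using that[of k'] refl D by auto
  next
    case False
    then have "k' \<in> {2..p-2}"
      using \<open>0 < k'\<close> \<open>k' < p\<close> by auto
    then obtain l where "l \<in> S" and l: "k' = l \<or> [k' * l = 1] (mod p)"
      using assms(1) unfolding inv_pair_reps_def by blast
    show ?thesis
    proof (cases "k' = l")
      case True
      then show ?thesis
        using that[of l] \<open>l \<in> S\<close> refl D by auto
    next
      case False
      then have "[1 = l * k'] (mod p)"
        using l by (simp add: cong_sym_eq mult.commute)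
      then have "diag_subgroup k' 1 = diag_subgroup (1 * k') (l * k')"
        by (intro diag_subgroup_cong) simp_all
      also have "\<dots> = diag_subgroup 1 l"
        using \<open>0 < k'\<close> \<open>k' < p\<close> p_gt_2 by (intro diag_subgroup_scale) (auto dest: dvd_imp_le)
      finally show ?thesis
        using that[of l] \<open>l \<in> S\<close> conj_subgroups_swap_diag_subgroup[of 1 k'] D by auto
    qed
  qed
qed

definition rep_subgroups :: "nat set \<Rightarrow> mat2 set set" where
  "rep_subgroups S = (\<lambda>(a, b). diag_subgroup a b) ` rep_exponents p S"

lemma rep_exponents_nontrivial: "(a, b) \<in> rep_exponents p S \<Longrightarrow> \<not> (p dvd a \<and> p dvd b)"
  using p_gt_2 by (auto simp: rep_exponents_def)

lemma diag_subgroup_in_rep_subgroups: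
  "(a, b) \<in> rep_exponents p S \<Longrightarrow> diag_subgroup a b \<in> rep_subgroups S"
  unfolding rep_subgroups_def by (rule image_eqI[of _ _ "(a, b)"]) simp_all

lemma conj_diag_subgroup_rep:
  assumes "inv_pair_reps p S" and "\<not> (p dvd a \<and> p dvd b)"
  obtains a' b' where "(a', b') \<in> rep_exponents p S"
    and "conj_subgroups G (diag_subgroup a b) (diag_subgroup a' b')"
proof -
  have zero_one: "(0, 1) \<in> rep_exponents p S"
    by (simp add: rep_exponents_def)
  consider "p dvd a" | "p dvd b" | "\<not> p dvd a" "\<not> p dvd b"
    by blast
  then show ?thesis
  proof cases
    case 1
    then have "diag_subgroup a b = diag_subgroup 0 1"
      using assms(2) diag_subgroup_eq_0_1 by blast
    then show ?thesis
      using that[OF zero_one] GL2.conj_subgroups_refl[OF diag_subgroup_subset] by simp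
  next
    case 2
    then have "diag_subgroup b a = diag_subgroup 0 1"
      using assms(2) diag_subgroup_eq_0_1 by blast
    then show ?thesis
      using that[OF zero_one] conj_subgroups_swap_diag_subgroup[of a b] by simp
  next
    case 3
    then obtain k where "\<not> p dvd k" and k: "diag_subgroup a b = diag_subgroup 1 k"
      using diag_subgroup_eq_1 by blast
    obtain l where "l \<in> {1, p - 1} \<union> S" "conj_subgroups G (diag_subgroup 1 k) (diag_subgroup 1 l)"
      using conj_diag_subgroup_1_rep[OF assms(1) \<open>\<not> p dvd k\<close>] .
    moreover have "(1, l) \<in> rep_exponents p S"
      using \<open>l \<in> {1, p - 1} \<union> S\<close> unfolding rep_exponents_eq by blast
    ultimately show ?thesis
      using that k by simp
  qed
qed

lemma rep_subgroups_complete: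
  assumes "inv_pair_reps p S" and "subgroup H G" and "card H = p"
  shows "\<exists>K\<in>rep_subgroups S. conj_subgroups G H K"
proof -
  obtain a b where "\<not> (p dvd a \<and> p dvd b)" and "conj_subgroups G H (diag_subgroup a b)"
    using subgroup_order_p_conj_diag_subgroup[OF assms(2,3)] .
  moreover obtain a' b' where "(a', b') \<in> rep_exponents p S"
    and "conj_subgroups G (diag_subgroup a b) (diag_subgroup a' b')"
    using conj_diag_subgroup_rep[OF assms(1) \<open>\<not> (p dvd a \<and> p dvd b)\<close>] .
  moreover have "H \<subseteq> carrier G"
    using assms(2) subgroup.subset by blast
  ultimately show ?thesis
    using diag_subgroup_in_rep_subgroups GL2.conj_subgroups_trans by blast
qed

lemma rep_subgroups_conj_eq:
  assumes "inv_pair_reps p S" and "(a, b) \<in> rep_exponents p S" and "(a', b') \<in> rep_exponents p S"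
    and "conj_subgroups G (diag_subgroup a b) (diag_subgroup a' b')"
  shows "(a, b) = (a', b')"
proof -
  obtain k where "[a = a' * k] (mod p) \<and> [b = b' * k] (mod p) \<or> [a = b' * k] (mod p) \<and> [b = a' * k] (mod p)"
    using conj_diag_subgroup_exponents[OF assms(4)] .
  then show ?thesis
    by (rule rep_exponents_inequivalent[OF prime_p p_gt_2 assms(1-3)])
qed

lemma conj_class_reps_rep_subgroups:
  assumes "inv_pair_reps p S"
  shows "conj_class_reps G p (rep_subgroups S)"
  unfolding conj_class_reps_def
proof (intro conjI)
  show "\<forall>H\<in>rep_subgroups S. subgroup H G \<and> card H = p"
    using subgroup_diag_subgroup card_diag_subgroup rep_exponents_nontrivial
    by (auto simp: rep_subgroups_def)
  show "\<forall>H. subgroup H G \<and> card H = p \<longrightarrow> (\<exists>K\<in>rep_subgroups S. conj_subgroups G H K)"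
    using rep_subgroups_complete[OF assms] by blast
  show "\<forall>H\<in>rep_subgroups S. \<forall>K\<in>rep_subgroups S. conj_subgroups G H K \<longrightarrow> H = K"
    using rep_subgroups_conj_eq[OF assms] by (auto simp: rep_subgroups_def)
qed

lemma card_rep_subgroups:
  assumes "inv_pair_reps p S"
  shows "card (rep_subgroups S) = card S + 3"
proof -
  have "inj_on (\<lambda>(a, b). diag_subgroup a b) (rep_exponents p S)"
  proof (rule inj_onI, clarify)
    fix a b a' b' assume "(a, b) \<in> rep_exponents p S" "(a', b') \<in> rep_exponents p S"
      and "diag_subgroup a b = diag_subgroup a' b'"
    then show "a = a' \<and> b = b'"
      using rep_subgroups_conj_eq[OF assms] GL2.conj_subgroups_refl[OF diag_subgroup_subset]
      by (metis prod.inject)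
  qed
  then show ?thesis
    using card_rep_exponents[OF p_gt_2 assms] by (simp add: rep_subgroups_def card_image)
qed

end

theorem mainTheorem3:
  fixes p q lam :: nat and S :: "nat set"
  assumes "Factorial_Ring.prime p" and "Factorial_Ring.prime q" and "p > 2" and "q > p" and "q \<ge> 5"
    and "p dvd q - 1" and "\<not> p dvd q + 1" and "\<not> p^2 dvd q - 1"
    and "lam < q" and "ord q lam = p"
    and "inv_pair_reps p S"
  shows "conj_class_reps (GL2 (int q)) p
           ({generate (GL2 (int q)) {(1, 0, 0, int lam)},
             generate (GL2 (int q)) {(int lam, 0, 0, int lam)},
             generate (GL2 (int q)) {(int lam, 0, 0, int ((lam ^ (p - 1)) mod q))}}
            \<union> (\<lambda>k. generate (GL2 (int q)) {(int lam, 0, 0, int ((lam ^ k) mod q))}) ` S)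
       \<and> card ({generate (GL2 (int q)) {(1, 0, 0, int lam)},
             generate (GL2 (int q)) {(int lam, 0, 0, int lam)},
             generate (GL2 (int q)) {(int lam, 0, 0, int ((lam ^ (p - 1)) mod q))}}
            \<union> (\<lambda>k. generate (GL2 (int q)) {(int lam, 0, 0, int ((lam ^ k) mod q))}) ` S)
           = (p + 3) div 2
       \<and> card (subgroup_conj_classes (GL2 (int q)) p) = (p + 3) div 2"
proof -
  interpret gl2_root q p lam
    using assms by unfold_locales auto
  have reps: "{generate G {(1, 0, 0, int lam)}, generate G {(int lam, 0, 0, int lam)},
      generate G {(int lam, 0, 0, int ((lam ^ (p - 1)) mod q))}}
      \<union> (\<lambda>k. generate G {(int lam, 0, 0, int ((lam ^ k) mod q))}) ` S = rep_subgroups S"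
    using assms(9) lam_pow_0
    by (simp add: rep_subgroups_def rep_exponents_def image_Un image_image diag_subgroup_def
        diag_lam_def mat2_diag_def lam_pow_def)
  have "2 * card S = p - 3"
    using card_inv_pair_reps[OF assms(1,11)] .
  then have count: "(p + 3) div 2 = card S + 3"
    using assms(3) by linarith
  show ?thesis
    unfolding reps count using conj_class_reps_rep_subgroups[OF assms(11)] card_rep_subgroups[OF assms(11)]
      GL2.card_subgroup_conj_classes by simp
qed

end
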